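(* Let $D$ be an API-domain whose conductor $[D:\overline{D}]$ is nonzero. Then $D\subseteq\overline{D}$ is a bounded root extension, and hence $\overline{D}$ is an API-domain. Consequently, if $D$ is a quasilocal API-domain, not a field, with $[D:\overline{D}]\neq0$, then $\overline{D}$ is a DVR.
   Context: $\overline{D}$ is the integral closure of $D$ in its quotient field $K$; $[D:\overline{D}]=\{x\in K: x\overline{D}\subseteq D\}$. An API-domain is an integral domain in which for every nonempty subset $\{d_\alpha\}$ of nonzero elements there is $n$ with the ideal $(\{d_\alpha^n\})$ principal. $D\subseteq\overline D$ is a bounded root extension if there is a single natural number $n$ with $x^n\in D$ for all $x\in\overline D$. Quasilocal: unique maximal ideal. DVR: local PID not a field. *)

theory Defs
  imports "HOL-Computational_Algebra.Fraction_Field" "HOL-Computational_Algebra.Polynomial"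
begin

text \<open>Subrings are represented as subsets R of an ambient commutative ring
  (here: the quotient field of D, the type 'a fract).\<close>

definition gen_ideal :: "'b::comm_ring_1 set \<Rightarrow> 'b set \<Rightarrow> 'b set" where
  "gen_ideal R A = {x. \<exists>F c. finite F \<and> F \<subseteq> A \<and> (\<forall>a\<in>F. c a \<in> R) \<and>
                       x = (\<Sum>a\<in>F. c a * a)}"

definition is_ideal :: "'b::comm_ring_1 set \<Rightarrow> 'b set \<Rightarrow> bool" where
  "is_ideal R I \<longleftrightarrow> I \<subseteq> R \<and> 0 \<in> I \<and> (\<forall>a\<in>I. \<forall>b\<in>I. a + b \<in> I)
                  \<and> (\<forall>r\<in>R. \<forall>a\<in>I. r * a \<in> I)"

definition principal_in :: "'b::comm_ring_1 set \<Rightarrow> 'b set \<Rightarrow> bool" where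
  "principal_in R I \<longleftrightarrow> (\<exists>g\<in>R. I = {g * r | r. r \<in> R})"

definition api_set :: "'b::comm_ring_1 set \<Rightarrow> bool" where
  "api_set R \<longleftrightarrow> (\<forall>S. S \<noteq> {} \<and> S \<subseteq> R - {0} \<longrightarrow>
      (\<exists>n::nat. n \<ge> 1 \<and> principal_in R (gen_ideal R ((\<lambda>d. d ^ n) ` S))))"

definition integral_closure :: "'b::field set \<Rightarrow> 'b set" where
  "integral_closure R = {x. \<exists>p. lead_coeff p = 1 \<and> (\<forall>i. coeff p i \<in> R) \<and> poly p x = 0}"

definition conductor :: "'b::field set \<Rightarrow> 'b set \<Rightarrow> 'b set" where
  "conductor R S = {x. \<forall>y\<in>S. x * y \<in> R}"

definition bounded_root_ext :: "'b::comm_ring_1 set \<Rightarrow> 'b set \<Rightarrow> bool" where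
  "bounded_root_ext R S \<longleftrightarrow> (\<exists>n::nat. n \<ge> 1 \<and> (\<forall>x\<in>S. x ^ n \<in> R))"

definition maximal_ideal :: "'b::comm_ring_1 set \<Rightarrow> 'b set \<Rightarrow> bool" where
  "maximal_ideal R M \<longleftrightarrow> is_ideal R M \<and> M \<noteq> R \<and>
     (\<forall>I. is_ideal R I \<and> M \<subseteq> I \<longrightarrow> I = M \<or> I = R)"

definition quasilocal :: "'b::comm_ring_1 set \<Rightarrow> bool" where
  "quasilocal R \<longleftrightarrow> (\<exists>!M. maximal_ideal R M)"

definition is_field_set :: "'b::comm_ring_1 set \<Rightarrow> bool" where
  "is_field_set R \<longleftrightarrow> (\<forall>x\<in>R. x \<noteq> 0 \<longrightarrow> (\<exists>y\<in>R. x * y = 1))"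

text \<open>DVR: local principal ideal domain which is not a field
  (subrings of a field are automatically domains).\<close>
definition DVR :: "'b::comm_ring_1 set \<Rightarrow> bool" where
  "DVR R \<longleftrightarrow> quasilocal R \<and> (\<forall>I. is_ideal R I \<longrightarrow> principal_in R I) \<and> \<not> is_field_set R"

definition dom_in_fract :: "'a::idom fract set" where
  "dom_in_fract = range (\<lambda>a. Fraction_Field.Fract a 1)"

end

theory Submission
  imports Defs
begin

text \<open>Fix \<open>c \<noteq> 0\<close> in the conductor. The basic API argument: if \<open>S\<close> is a nonempty set of
  nonzero elements with \<open>x S \<subseteq> S\<close> and \<open>(s\<^sup>n : s \<in> S) = (g)\<close>, then \<open>x\<^sup>n g \<in> (g)\<close>, so
  \<open>x\<^sup>n \<in> D\<close>. Every integral \<open>x\<close> is almost integral (\<open>c\<^sup>m x\<^sup>k \<in> D\<close> for all \<open>k\<close>), and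
  \<open>S = {c\<^sup>m x\<^sup>k}\<close> shows that the integral closure is \<open>{x. x\<^sup>n \<in> D for some n \<ge> 1}\<close>; in
  particular it is a ring, and \<open>S\<close> = \<open>c\<close> times its nonzero elements yields one \<open>n\<close> for all of them.
  The API property passes to bounded root extensions. If \<open>D\<close> is quasilocal, an ideal that is
  principal and generated by a set \<open>A\<close> is generated by a member of \<open>A\<close>; applied to
  \<open>{a\<^sup>n, b\<^sup>n}\<close> this makes the integral closure a valuation domain, hence quasilocal,
  and a quasilocal, root closed API domain has only principal ideals.\<close>

section \<open>Subrings of a field and generated ideals\<close>

definition subring_set :: "'b::field set \<Rightarrow> bool" where
  "subring_set R \<longleftrightarrow> 0 \<in> R \<and> 1 \<in> R \<and> (\<forall>x\<in>R. \<forall>y\<in>R. x + y \<in> R \<and> x * y \<in> R \<and> - x \<in> R)"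

lemma subring_zero: "subring_set R \<Longrightarrow> 0 \<in> R"
  and subring_one: "subring_set R \<Longrightarrow> 1 \<in> R"
  and subring_add: "subring_set R \<Longrightarrow> x \<in> R \<Longrightarrow> y \<in> R \<Longrightarrow> x + y \<in> R"
  and subring_mult: "subring_set R \<Longrightarrow> x \<in> R \<Longrightarrow> y \<in> R \<Longrightarrow> x * y \<in> R"
  and subring_uminus: "subring_set R \<Longrightarrow> x \<in> R \<Longrightarrow> - x \<in> R"
  by (simp_all add: subring_set_def)

lemma subring_power: "subring_set R \<Longrightarrow> x \<in> R \<Longrightarrow> x ^ n \<in> R"
  by (induction n) (auto simp: subring_one subring_mult)

lemma subring_sum: "subring_set R \<Longrightarrow> (\<And>a. a \<in> F \<Longrightarrow> f a \<in> R) \<Longrightarrow> sum f F \<in> R"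
  by (induction F rule: infinite_finite_induct) (auto simp: subring_zero subring_add)

lemma subring_of_nat: "subring_set R \<Longrightarrow> of_nat n \<in> R"
  by (induction n) (auto simp: subring_zero subring_one subring_add)

lemma gen_idealI:
  assumes "finite F" and "F \<subseteq> A" and "\<And>a. a \<in> F \<Longrightarrow> c a \<in> R"
  shows "(\<Sum>a\<in>F. c a * a) \<in> gen_ideal R A"
  using assms unfolding gen_ideal_def by blast

lemma gen_idealE:
  assumes "y \<in> gen_ideal R A"
  obtains F c where "finite F" and "F \<subseteq> A" and "\<And>a. a \<in> F \<Longrightarrow> c a \<in> R"
    and "y = (\<Sum>a\<in>F. c a * a)"
  using assms unfolding gen_ideal_def by blast

lemma gen_ideal_mem:
  assumes "1 \<in> R" and "a \<in> A"
  shows "a \<in> gen_ideal R A"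
  using gen_idealI[of "{a}" A "\<lambda>_. 1" R] assms by simp

lemma gen_ideal_mono:
  assumes "R \<subseteq> R'" and "A \<subseteq> A'"
  shows "gen_ideal R A \<subseteq> gen_ideal R' A'"
proof
  fix y assume "y \<in> gen_ideal R A"
  then obtain F c where "finite F" "F \<subseteq> A" "\<And>a. a \<in> F \<Longrightarrow> c a \<in> R"
    and "y = (\<Sum>a\<in>F. c a * a)"
    by (rule gen_idealE) blast
  with assms show "y \<in> gen_ideal R' A'" using gen_idealI[of F A' c R'] by blast
qed

lemma gen_ideal_mult_closed:
  assumes "subring_set R" and "r \<in> R" and "y \<in> gen_ideal R A"
  shows "r * y \<in> gen_ideal R A"
proof -
  from assms(3) obtain F c where F: "finite F" "F \<subseteq> A" "\<And>a. a \<in> F \<Longrightarrow> c a \<in> R"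
    and y: "y = (\<Sum>a\<in>F. c a * a)"
    by (rule gen_idealE) blast
  have "r * y = (\<Sum>a\<in>F. (r * c a) * a)" by (simp add: y sum_distrib_left mult_ac)
  also have "\<dots> \<in> gen_ideal R A" using F assms(1,2) by (intro gen_idealI) (auto intro: subring_mult)
  finally show ?thesis .
qed

lemma gen_ideal_mult_image:
  fixes u :: "'b::field"
  assumes "u \<noteq> 0" and "y \<in> gen_ideal R A"
  shows "u * y \<in> gen_ideal R ((*) u ` A)"
proof -
  from assms(2) obtain F c where F: "finite F" "F \<subseteq> A" "\<And>a. a \<in> F \<Longrightarrow> c a \<in> R"
    and y: "y = (\<Sum>a\<in>F. c a * a)"
    by (rule gen_idealE) blast
  have inj: "inj_on ((*) u) F" using assms(1) by (auto intro: inj_onI)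
  have "u * y = (\<Sum>a\<in>F. c a * (u * a))" by (simp add: y sum_distrib_left mult_ac)
  also have "\<dots> = (\<Sum>b\<in>(*) u ` F. c (b / u) * b)"
    by (subst sum.reindex[OF inj]) (simp add: assms(1))
  also have "\<dots> \<in> gen_ideal R ((*) u ` A)" using F assms(1) by (intro gen_idealI) auto
  finally show ?thesis .
qed

lemma gen_ideal_subset_ideal:
  assumes I: "is_ideal R I" and "A \<subseteq> I"
  shows "gen_ideal R A \<subseteq> I"
proof
  fix y assume "y \<in> gen_ideal R A"
  then obtain F c where F: "finite F" "F \<subseteq> A" "\<And>a. a \<in> F \<Longrightarrow> c a \<in> R"
    and y: "y = (\<Sum>a\<in>F. c a * a)"
    by (rule gen_idealE) blast
  from F have "(\<Sum>a\<in>F. c a * a) \<in> I"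
  proof (induction F rule: finite_induct)
    case (insert a F)
    then have "c a * a \<in> I" using I \<open>A \<subseteq> I\<close> by (auto simp: is_ideal_def)
    with insert show ?case using I by (auto simp: is_ideal_def)
  qed (use I in \<open>simp add: is_ideal_def\<close>)
  then show "y \<in> I" by (simp add: y)
qed

lemma principal_is_ideal:
  assumes R: "subring_set R" and d: "d \<in> R"
  shows "is_ideal R {d * r | r. r \<in> R}"
  unfolding is_ideal_def
proof (intro conjI ballI)
  show "{d * r | r. r \<in> R} \<subseteq> R" using R d by (auto intro: subring_mult)
  show "0 \<in> {d * r | r. r \<in> R}" using subring_zero[OF R] by force
  fix a b assume "a \<in> {d * r | r. r \<in> R}" "b \<in> {d * r | r. r \<in> R}"
  then obtain r s where "r \<in> R" "s \<in> R" "a = d * r" "b = d * s" by blast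
  then show "a + b \<in> {d * r | r. r \<in> R}"
    using R by (auto intro!: exI[of _ "r + s"] subring_add simp: distrib_left)
next
  fix r a assume "r \<in> R" "a \<in> {d * r | r. r \<in> R}"
  then obtain s where "s \<in> R" "a = d * s" by blast
  then show "r * a \<in> {d * r | r. r \<in> R}"
    using R \<open>r \<in> R\<close> by (auto intro!: exI[of _ "r * s"] subring_mult simp: mult_ac)
qed

lemma gen_ideal_principal_extend:
  assumes R: "subring_set R" and T: "subring_set T" and RT: "R \<subseteq> T"
    and h: "h \<in> R" and gen: "gen_ideal R A = {h * r | r. r \<in> R}"
  shows "gen_ideal T A = {h * r | r. r \<in> T}"
proof
  have "h \<in> T" using h RT by blast
  have "A \<subseteq> gen_ideal R A" using gen_ideal_mem[OF subring_one[OF R]] by blast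
  also have "\<dots> \<subseteq> {h * r | r. r \<in> T}" unfolding gen using RT by blast
  finally show "gen_ideal T A \<subseteq> {h * r | r. r \<in> T}"
    by (rule gen_ideal_subset_ideal[OF principal_is_ideal[OF T \<open>h \<in> T\<close>]])
  have "h \<in> gen_ideal R A" using gen subring_one[OF R] by force
  then have "h \<in> gen_ideal T A" using gen_ideal_mono[OF RT] by blast
  show "{h * r | r. r \<in> T} \<subseteq> gen_ideal T A"
  proof
    fix y assume "y \<in> {h * r | r. r \<in> T}"
    then obtain r where "r \<in> T" "y = r * h" by (auto simp: mult.commute)
    then show "y \<in> gen_ideal T A"
      using gen_ideal_mult_closed[OF T _ \<open>h \<in> gen_ideal T A\<close>] by simp
  qed
qed

section \<open>Maximal ideals and quasilocal rings\<close>

definition ring_units :: "'b::comm_ring_1 set \<Rightarrow> 'b set" where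
  "ring_units R = {x \<in> R. \<exists>y\<in>R. x * y = 1}"

lemma ideal_eq_if_one_mem:
  assumes "is_ideal R I" and "1 \<in> I"
  shows "I = R"
proof -
  have "r \<in> I" if "r \<in> R" for r
    using assms that unfolding is_ideal_def by (metis mult.right_neutral)
  then show ?thesis using assms(1) unfolding is_ideal_def by blast
qed

lemma ideal_eq_if_unit_mem:
  assumes "is_ideal R I" and "u \<in> I" and "u \<in> ring_units R"
  shows "I = R"
proof -
  obtain v where "v \<in> R" "u * v = 1" using assms(3) unfolding ring_units_def by blast
  then have "1 \<in> I" using assms(1,2) unfolding is_ideal_def by (metis mult.commute)
  with assms(1) show ?thesis by (rule ideal_eq_if_one_mem)
qed

lemma maximal_ideal_units_disjoint:
  assumes "maximal_ideal R M" and "u \<in> ring_units R"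
  shows "u \<notin> M"
  using assms ideal_eq_if_unit_mem unfolding maximal_ideal_def by blast

lemma chain_Union_is_ideal:
  assumes "C \<noteq> {}" and "chain\<^sub>\<subseteq> C" and "\<And>J. J \<in> C \<Longrightarrow> is_ideal R J"
  shows "is_ideal R (\<Union>C)"
  unfolding is_ideal_def
proof (intro conjI ballI)
  show "\<Union>C \<subseteq> R" "0 \<in> \<Union>C" using assms(1,3) unfolding is_ideal_def by blast+
  fix a b assume "a \<in> \<Union>C" "b \<in> \<Union>C"
  then obtain X Y where "X \<in> C" "a \<in> X" "Y \<in> C" "b \<in> Y" by blast
  moreover have "X \<subseteq> Y \<or> Y \<subseteq> X" using assms(2) \<open>X \<in> C\<close> \<open>Y \<in> C\<close> unfolding chain_subset_def by blast
  ultimately show "a + b \<in> \<Union>C" using assms(3) unfolding is_ideal_def by blast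
next
  fix r a assume "r \<in> R" "a \<in> \<Union>C"
  then show "r * a \<in> \<Union>C" using assms(3) unfolding is_ideal_def by blast
qed

lemma ideal_subset_maximal_ideal:
  assumes R: "subring_set R" and I: "is_ideal R I" and one: "1 \<notin> I"
  obtains M where "maximal_ideal R M" and "I \<subseteq> M"
proof -
  define A where "A = {J. is_ideal R J \<and> I \<subseteq> J \<and> 1 \<notin> J}"
  have "\<exists>U\<in>A. \<forall>X\<in>C. X \<subseteq> U" if "C \<in> chains A" for C
  proof (cases "C = {}")
    case True then show ?thesis using I one unfolding A_def by blast
  next
    case False
    have "C \<subseteq> A" "chain\<^sub>\<subseteq> C" using that unfolding chains_def by auto
    then have "\<Union>C \<in> A" using False chain_Union_is_ideal[of C R] unfolding A_def by blast
    then show ?thesis by blast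
  qed
  then obtain M where MA: "M \<in> A" and Mmax: "\<forall>X\<in>A. M \<subseteq> X \<longrightarrow> X = M"
    using Zorn_Lemma2[of A] by blast
  have "maximal_ideal R M" unfolding maximal_ideal_def
  proof (intro conjI allI impI)
    show "is_ideal R M" using MA unfolding A_def by blast
    show "M \<noteq> R" using MA subring_one[OF R] unfolding A_def by blast
    fix J assume J: "is_ideal R J \<and> M \<subseteq> J"
    show "J = M \<or> J = R"
    proof (cases "1 \<in> J")
      case True then show ?thesis using J ideal_eq_if_one_mem by blast
    next
      case False then show ?thesis using J MA Mmax unfolding A_def by blast
    qed
  qed
  then show ?thesis using that MA unfolding A_def by blast
qed

lemma quasilocal_nonunit_mem_maximal:
  assumes R: "subring_set R" and "quasilocal R" and M: "maximal_ideal R M"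
    and d: "d \<in> R - ring_units R"
  shows "d \<in> M"
proof -
  let ?dR = "{d * r | r. r \<in> R}"
  have "1 \<notin> ?dR" using d by (force simp: ring_units_def)
  then obtain M' where M': "maximal_ideal R M'" "?dR \<subseteq> M'"
    using ideal_subset_maximal_ideal[OF R principal_is_ideal[OF R]] d by blast
  then have "M' = M" using \<open>quasilocal R\<close> M unfolding quasilocal_def by blast
  moreover have "d \<in> ?dR" using subring_one[OF R] by force
  ultimately show ?thesis using M'(2) by blast
qed

lemma quasilocal_gen_ideal_one:
  assumes R: "subring_set R" and "quasilocal R" and "B \<subseteq> R" and "1 \<in> gen_ideal R B"
  shows "B \<inter> ring_units R \<noteq> {}"
proof
  assume none: "B \<inter> ring_units R = {}"
  obtain M where M: "maximal_ideal R M" using \<open>quasilocal R\<close> unfolding quasilocal_def by blast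
  have "B \<subseteq> M" using quasilocal_nonunit_mem_maximal[OF R \<open>quasilocal R\<close> M] none \<open>B \<subseteq> R\<close> by blast
  moreover have "is_ideal R M" using M by (simp add: maximal_ideal_def)
  ultimately have "1 \<in> M" using gen_ideal_subset_ideal \<open>1 \<in> gen_ideal R B\<close> by blast
  moreover have "1 \<in> ring_units R" using subring_one[OF R] unfolding ring_units_def by force
  ultimately show False using maximal_ideal_units_disjoint[OF M] by blast
qed

text \<open>Divided by the generator, the elements of \<open>A\<close> generate the unit ideal, so one of the
  quotients is a unit.\<close>
lemma quasilocal_principal_gen_ideal_member:
  fixes A :: "'b::field set"
  assumes R: "subring_set R" and "quasilocal R" and "A \<noteq> {}" and "0 \<notin> A"
    and "principal_in R (gen_ideal R A)"
  obtains a where "a \<in> A" and "\<And>b. b \<in> A \<Longrightarrow> b / a \<in> R"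
proof -
  obtain g where gen: "gen_ideal R A = {g * r | r. r \<in> R}"
    using assms(5) unfolding principal_in_def by blast
  have quot: "b / g \<in> R" and "g \<noteq> 0" if b: "b \<in> A" for b
  proof -
    obtain r where "r \<in> R" "b = g * r" using gen gen_ideal_mem[OF subring_one[OF R] b] by blast
    then show "g \<noteq> 0" "b / g \<in> R" using \<open>0 \<notin> A\<close> b by auto
  qed
  then have "g \<noteq> 0" using \<open>A \<noteq> {}\<close> by blast
  have "g \<in> gen_ideal R A" using gen subring_one[OF R] by force
  then have "inverse g * g \<in> gen_ideal R ((*) (inverse g) ` A)"
    using \<open>g \<noteq> 0\<close> by (intro gen_ideal_mult_image) simp_all
  moreover have "(*) (inverse g) ` A \<subseteq> R" using quot by (auto simp: field_simps)
  ultimately have "(*) (inverse g) ` A \<inter> ring_units R \<noteq> {}"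
    using quasilocal_gen_ideal_one[OF R \<open>quasilocal R\<close>] \<open>g \<noteq> 0\<close> by simp
  then obtain a where a: "a \<in> A" and "inverse g * a \<in> ring_units R" by blast
  then obtain v where "v \<in> R" and "inverse g * a * v = 1" unfolding ring_units_def by blast
  moreover have "a \<noteq> 0" using a \<open>0 \<notin> A\<close> by blast
  ultimately have "g / a \<in> R" using \<open>g \<noteq> 0\<close> by (auto simp: field_simps)
  have "b / a \<in> R" if "b \<in> A" for b
  proof -
    have "b / a = (b / g) * (g / a)" using \<open>g \<noteq> 0\<close> by simp
    also have "\<dots> \<in> R" using subring_mult[OF R quot[OF that] \<open>g / a \<in> R\<close>] .
    finally show ?thesis .
  qed
  then show ?thesis using that a by blast
qed

section \<open>Valuation domains\<close>

text \<open>No nonzeroness hypothesis is needed: for \<open>a = 0\<close> the disjunct \<open>b / a = 0 \<in> R\<close> holds.\<close>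
definition valuation_domain_set :: "'b::field set \<Rightarrow> bool" where
  "valuation_domain_set R \<longleftrightarrow> (\<forall>a\<in>R. \<forall>b\<in>R. b / a \<in> R \<or> a / b \<in> R)"

lemma nonunit_mult:
  assumes T: "subring_set T" and x: "x \<in> T - ring_units T" and r: "r \<in> T"
  shows "r * x \<in> T - ring_units T"
proof -
  have "r * x \<in> T" using T x r by (auto intro: subring_mult)
  moreover have "r * x \<notin> ring_units T"
  proof
    assume "r * x \<in> ring_units T"
    then obtain y where "y \<in> T" "r * x * y = 1" unfolding ring_units_def by blast
    then have "x * (r * y) = 1" "r * y \<in> T" using T r by (auto simp: mult_ac intro: subring_mult)
    then show False using x unfolding ring_units_def by blast
  qed
  ultimately show ?thesis by blast
qed

lemma valuation_domain_nonunits_ideal: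
  assumes T: "subring_set T" and val: "valuation_domain_set T"
  shows "is_ideal T (T - ring_units T)"
  unfolding is_ideal_def
proof (intro conjI ballI)
  show "0 \<in> T - ring_units T" using subring_zero[OF T] by (simp add: ring_units_def)
  have sum: "x + y \<in> T - ring_units T"
    if x: "x \<in> T - ring_units T" and y: "y \<in> T - ring_units T" and "y / x \<in> T" for x y
  proof (cases "x = 0")
    case True then show ?thesis using y by simp
  next
    case False
    then have "x + y = (1 + y / x) * x" by (simp add: distrib_right)
    moreover have "1 + y / x \<in> T" using T \<open>y / x \<in> T\<close> by (auto intro: subring_add subring_one)
    ultimately show ?thesis using nonunit_mult[OF T x] by simp
  qed
  fix x y assume "x \<in> T - ring_units T" "y \<in> T - ring_units T"
  then show "x + y \<in> T - ring_units T"
    using sum[of x y] sum[of y x] val unfolding valuation_domain_set_def by (auto simp: add.commute)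
next
  fix r x assume "r \<in> T" "x \<in> T - ring_units T"
  then show "r * x \<in> T - ring_units T" using nonunit_mult[OF T] by blast
qed auto

lemma valuation_domain_quasilocal:
  assumes T: "subring_set T" and val: "valuation_domain_set T"
  shows "quasilocal T"
  unfolding quasilocal_def
proof
  let ?P = "T - ring_units T"
  have ideal: "is_ideal T ?P" using valuation_domain_nonunits_ideal[OF T val] .
  have proper: "?P \<noteq> T" using subring_one[OF T] by (force simp: ring_units_def)
  show "maximal_ideal T ?P" unfolding maximal_ideal_def
  proof (intro conjI allI impI ideal proper)
    fix J assume J: "is_ideal T J \<and> ?P \<subseteq> J"
    show "J = ?P \<or> J = T"
    proof (cases "J \<subseteq> ?P")
      case False
      then obtain u where "u \<in> J" "u \<in> ring_units T" using J unfolding is_ideal_def by blast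
      then show ?thesis using J ideal_eq_if_unit_mem by blast
    qed (use J in blast)
  qed
  fix M assume M: "maximal_ideal T M"
  then have "M \<subseteq> T" by (simp add: maximal_ideal_def is_ideal_def)
  then have "M \<subseteq> ?P" using maximal_ideal_units_disjoint[OF M] by blast
  moreover have "\<forall>I. is_ideal T I \<and> M \<subseteq> I \<longrightarrow> I = M \<or> I = T"
    using M by (simp add: maximal_ideal_def)
  ultimately show "M = ?P" using ideal proper by blast
qed

section \<open>API domains\<close>

lemma api_uniform_power:
  fixes R :: "'b::field set"
  assumes api: "api_set R" and R: "subring_set R" and "S \<noteq> {}" and "S \<subseteq> R - {0}"
    and stable: "\<And>x. x \<in> X \<Longrightarrow> x \<noteq> 0 \<and> (*) x ` S \<subseteq> S"
  obtains n where "n \<ge> 1" and "\<And>x. x \<in> X \<Longrightarrow> x ^ n \<in> R"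
proof -
  obtain n where "n \<ge> 1" and "principal_in R (gen_ideal R ((\<lambda>s. s ^ n) ` S))"
    using api assms(3,4) unfolding api_set_def by blast
  then obtain g where gen: "gen_ideal R ((\<lambda>s. s ^ n) ` S) = {g * r | r. r \<in> R}"
    unfolding principal_in_def by blast
  let ?A = "(\<lambda>s. s ^ n) ` S"
  have "g \<noteq> 0"
  proof -
    obtain s where s: "s \<in> S" using assms(3) by blast
    then have "s ^ n \<in> gen_ideal R ?A" by (intro gen_ideal_mem subring_one[OF R]) auto
    then obtain r where "s ^ n = g * r" unfolding gen by blast
    moreover have "s ^ n \<noteq> 0" using s assms(4) by auto
    ultimately show ?thesis by auto
  qed
  have g: "g \<in> gen_ideal R ?A" unfolding gen using subring_one[OF R] by force
  have "x ^ n \<in> R" if x: "x \<in> X" for x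
  proof -
    have "x ^ n \<noteq> 0" using stable[OF x] by simp
    have "(*) (x ^ n) ` ?A \<subseteq> ?A"
      using stable[OF x] by (auto simp: image_image power_mult_distrib[symmetric])
    then have "gen_ideal R ((*) (x ^ n) ` ?A) \<subseteq> gen_ideal R ?A" by (intro gen_ideal_mono) auto
    then have "x ^ n * g \<in> gen_ideal R ?A" using gen_ideal_mult_image[OF \<open>x ^ n \<noteq> 0\<close> g] by blast
    then obtain r where "r \<in> R" "x ^ n * g = g * r" unfolding gen by blast
    then show ?thesis using \<open>g \<noteq> 0\<close> by (simp add: mult.commute)
  qed
  with \<open>n \<ge> 1\<close> show ?thesis using that by blast
qed

definition almost_integral :: "'b::comm_ring_1 set \<Rightarrow> 'b \<Rightarrow> bool" where
  "almost_integral R x \<longleftrightarrow> (\<exists>e\<in>R. e \<noteq> 0 \<and> (\<forall>k. e * x ^ k \<in> R))"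

lemma api_almost_integral_power:
  fixes R :: "'b::field set"
  assumes api: "api_set R" and R: "subring_set R" and "almost_integral R x"
  obtains n where "n \<ge> 1" and "x ^ n \<in> R"
proof (cases "x = 0")
  case True then show ?thesis using that[of 1] subring_zero[OF R] by simp
next
  case False
  obtain e where "e \<in> R" "e \<noteq> 0" and e: "\<And>k. e * x ^ k \<in> R"
    using assms(3) unfolding almost_integral_def by blast
  have "(*) x ` range (\<lambda>k. e * x ^ k) \<subseteq> range (\<lambda>k. e * x ^ k)"
  proof
    fix y assume "y \<in> (*) x ` range (\<lambda>k. e * x ^ k)"
    then obtain k where "y = x * (e * x ^ k)" by blast
    then have "y = e * x ^ Suc k" by (simp add: mult_ac)
    then show "y \<in> range (\<lambda>k. e * x ^ k)" by blast
  qed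
  moreover have "range (\<lambda>k. e * x ^ k) \<subseteq> R - {0}" using e \<open>e \<noteq> 0\<close> False by auto
  ultimately show ?thesis
    using api_uniform_power[OF api R, of "range (\<lambda>k. e * x ^ k)" "{x}"] that False by auto
qed

lemma api_quasilocal_ratio_power:
  fixes R :: "'b::field set"
  assumes api: "api_set R" and R: "subring_set R" and ql: "quasilocal R"
    and a: "a \<in> R - {0}" and b: "b \<in> R - {0}"
  obtains n where "n \<ge> 1" and "(b / a) ^ n \<in> R \<or> (a / b) ^ n \<in> R"
proof -
  have "{a, b} \<noteq> {} \<and> {a, b} \<subseteq> R - {0}" using a b by blast
  then have "\<exists>n\<ge>1. principal_in R (gen_ideal R ((\<lambda>s. s ^ n) ` {a, b}))"
    by (rule api[unfolded api_set_def, rule_format])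
  then obtain n where "n \<ge> 1" and pr: "principal_in R (gen_ideal R {a ^ n, b ^ n})" by auto
  have "{a ^ n, b ^ n} \<noteq> {}" and "0 \<notin> {a ^ n, b ^ n}" using a b by auto
  then obtain t where "t \<in> {a ^ n, b ^ n}" and "\<And>u. u \<in> {a ^ n, b ^ n} \<Longrightarrow> u / t \<in> R"
    using quasilocal_principal_gen_ideal_member[OF R ql _ _ pr] by metis
  then have "b ^ n / a ^ n \<in> R \<or> a ^ n / b ^ n \<in> R" by blast
  then show ?thesis using that[OF \<open>n \<ge> 1\<close>] by (simp add: power_divide)
qed

definition root_closed :: "'b::comm_ring_1 set \<Rightarrow> bool" where
  "root_closed R \<longleftrightarrow> (\<forall>x n. n \<ge> 1 \<longrightarrow> x ^ n \<in> R \<longrightarrow> x \<in> R)"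

lemma api_principal_ideal:
  fixes T :: "'b::field set"
  assumes api: "api_set T" and T: "subring_set T" and ql: "quasilocal T" and rc: "root_closed T"
    and I: "is_ideal T I"
  shows "principal_in T I"
proof (cases "I \<subseteq> {0}")
  case True
  then have "I = {0}" using I unfolding is_ideal_def by blast
  also have "\<dots> = {0 * r | r. r \<in> T}" using subring_zero[OF T] by auto
  finally show ?thesis unfolding principal_in_def using subring_zero[OF T] by blast
next
  case False
  let ?S = "I - {0}"
  have S: "?S \<noteq> {}" "?S \<subseteq> T - {0}" using False I unfolding is_ideal_def by auto
  have "\<exists>n\<ge>1. principal_in T (gen_ideal T ((\<lambda>s. s ^ n) ` ?S))"
    using S by (intro api[unfolded api_set_def, rule_format]) blast
  then obtain n where "n \<ge> 1" and pr: "principal_in T (gen_ideal T ((\<lambda>s. s ^ n) ` ?S))" by blast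
  have "(\<lambda>s. s ^ n) ` ?S \<noteq> {}" "0 \<notin> (\<lambda>s. s ^ n) ` ?S" using S by auto
  then obtain t where "t \<in> (\<lambda>s. s ^ n) ` ?S"
    and quot_t: "\<And>u. u \<in> (\<lambda>s. s ^ n) ` ?S \<Longrightarrow> u / t \<in> T"
    using quasilocal_principal_gen_ideal_member[OF T ql _ _ pr] by metis
  then obtain s0 where s0: "s0 \<in> ?S" and "t = s0 ^ n" by blast
  have quot: "s ^ n / s0 ^ n \<in> T" if "s \<in> ?S" for s
    using quot_t[of "s ^ n"] that \<open>t = s0 ^ n\<close> by blast
  have "x \<in> {s0 * r | r. r \<in> T}" if "x \<in> I" for x
  proof (cases "x = 0")
    case True then show ?thesis using subring_zero[OF T] by force
  next
    case False
    then have "(x / s0) ^ n \<in> T" using quot \<open>x \<in> I\<close> by (simp add: power_divide)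
    then have "x / s0 \<in> T" using rc \<open>n \<ge> 1\<close> unfolding root_closed_def by blast
    moreover have "x = s0 * (x / s0)" using s0 by simp
    ultimately show ?thesis by blast
  qed
  moreover have "r * s0 \<in> I" if "r \<in> T" for r
    using I s0 that unfolding is_ideal_def by blast
  ultimately have "I = {s0 * r | r. r \<in> T}" by (auto simp: mult.commute)
  moreover have "s0 \<in> T" using s0 S by blast
  ultimately show ?thesis unfolding principal_in_def by blast
qed

lemma api_set_bounded_root_ext:
  assumes R: "subring_set R" and T: "subring_set T" and "R \<subseteq> T"
    and bre: "bounded_root_ext R T" and api: "api_set R"
  shows "api_set T"
  unfolding api_set_def
proof (intro allI impI)
  fix S assume S: "S \<noteq> {} \<and> S \<subseteq> T - {0}"
  obtain N where "N \<ge> 1" and N: "\<forall>x\<in>T. x ^ N \<in> R" using bre unfolding bounded_root_ext_def by blast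
  have "(\<lambda>s. s ^ N) ` S \<noteq> {} \<and> (\<lambda>s. s ^ N) ` S \<subseteq> R - {0}" using S N by auto
  then have "\<exists>m\<ge>1. principal_in R (gen_ideal R ((\<lambda>s. s ^ m) ` (\<lambda>s. s ^ N) ` S))"
    by (rule api[unfolded api_set_def, rule_format])
  then obtain m where "m \<ge> 1" and "principal_in R (gen_ideal R ((\<lambda>s. s ^ m) ` (\<lambda>s. s ^ N) ` S))"
    by blast
  then obtain h where "h \<in> R"
    and gen: "gen_ideal R ((\<lambda>s. s ^ m) ` (\<lambda>s. s ^ N) ` S) = {h * r | r. r \<in> R}"
    unfolding principal_in_def by blast
  have "(\<lambda>s. s ^ m) ` (\<lambda>s. s ^ N) ` S = (\<lambda>s. s ^ (N * m)) ` S"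
    by (simp add: image_image power_mult)
  then have gen_T: "gen_ideal T ((\<lambda>s. s ^ (N * m)) ` S) = {h * r | r. r \<in> T}"
    using gen_ideal_principal_extend[OF R T \<open>R \<subseteq> T\<close> \<open>h \<in> R\<close>] gen by simp
  have "h \<in> T" using \<open>h \<in> R\<close> \<open>R \<subseteq> T\<close> by blast
  have "principal_in T (gen_ideal T ((\<lambda>s. s ^ (N * m)) ` S))"
    unfolding principal_in_def by (intro bexI[of _ h] gen_T \<open>h \<in> T\<close>)
  moreover have "N * m \<ge> 1" using \<open>N \<ge> 1\<close> \<open>m \<ge> 1\<close> by simp
  ultimately show "\<exists>n\<ge>1. principal_in T (gen_ideal T ((\<lambda>s. s ^ n) ` S))" by blast
qed

lemma not_field_bounded_root_ext:
  assumes R: "subring_set R" and "R \<subseteq> T" and bre: "bounded_root_ext R T"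
    and nf: "\<not> is_field_set R"
  shows "\<not> is_field_set T"
proof
  assume "is_field_set T"
  obtain d where d: "d \<in> R" "d \<noteq> 0" and nonunit: "\<not> (\<exists>y\<in>R. d * y = 1)"
    using nf unfolding is_field_set_def by blast
  obtain y where "y \<in> T" and y: "d * y = 1"
    using \<open>is_field_set T\<close> d \<open>R \<subseteq> T\<close> unfolding is_field_set_def by blast
  obtain N where "N \<ge> 1" and N: "\<forall>x\<in>T. x ^ N \<in> R" using bre unfolding bounded_root_ext_def by blast
  have "d * (d ^ (N - 1) * y ^ N) = (d * y) ^ N"
    using \<open>N \<ge> 1\<close> by (simp add: power_mult_distrib mult.assoc[symmetric] power_Suc[symmetric])
  then have "d * (d ^ (N - 1) * y ^ N) = 1" by (simp add: y)
  moreover have "d ^ (N - 1) * y ^ N \<in> R" using d N \<open>y \<in> T\<close> R by (auto intro: subring_mult subring_power)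
  ultimately show False using nonunit by blast
qed

section \<open>Integral closure\<close>

lemma power_mem_integral_closure:
  fixes x :: "'b::field"
  assumes R: "subring_set R" and "n \<ge> 1" and "x ^ n \<in> R"
  shows "x \<in> integral_closure R"
proof -
  define p where "p = monom 1 n + [:- (x ^ n):]"
  have coeff_p: "coeff p i = (if i = n then 1 else 0) + (if i = 0 then - (x ^ n) else 0)" for i
    by (simp add: p_def coeff_monom coeff_pCons split: nat.split)
  have "degree p = n"
  proof (rule antisym)
    show "degree p \<le> n" unfolding p_def by (rule degree_add_le) (auto simp: degree_monom_le)
    show "n \<le> degree p" using \<open>n \<ge> 1\<close> by (intro le_degree) (simp add: coeff_p)
  qed
  then have "lead_coeff p = 1" using \<open>n \<ge> 1\<close> by (simp add: coeff_p)
  moreover have "\<forall>i. coeff p i \<in> R"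
    using R \<open>x ^ n \<in> R\<close> by (auto simp: coeff_p subring_zero subring_one subring_add subring_uminus)
  moreover have "poly p x = 0" by (simp add: p_def poly_monom)
  ultimately show ?thesis unfolding integral_closure_def by blast
qed

lemma subset_integral_closure: "subring_set R \<Longrightarrow> R \<subseteq> integral_closure R"
  using power_mem_integral_closure[of R 1] by auto

text \<open>With \<open>m\<close> the degree of a monic equation for \<open>x\<close>, the witness is \<open>c ^ m\<close>: for \<open>k < m\<close>
  we have \<open>c ^ m * x ^ k = c ^ (m - k) * (c * x) ^ k\<close>, and for \<open>k \<ge> m\<close> the equation expresses
  \<open>c ^ m * x ^ k\<close> through the same terms with smaller exponents.\<close>
lemma conductor_almost_integral:
  fixes R :: "'b::field set"
  assumes R: "subring_set R" and c: "c \<in> conductor R (integral_closure R)" and "c \<noteq> 0"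
    and x: "x \<in> integral_closure R"
  shows "almost_integral R x"
proof -
  obtain p where "lead_coeff p = 1" and coeff_R: "\<forall>i. coeff p i \<in> R" and "poly p x = 0"
    using x unfolding integral_closure_def by blast
  define m where "m = degree p"
  have "c * x \<in> R" using c x unfolding conductor_def by blast
  have "c * 1 \<in> R" using c subset_integral_closure[OF R] subring_one[OF R] unfolding conductor_def by blast
  then have "c \<in> R" by simp
  have "(\<Sum>i<m. coeff p i * x ^ i) + x ^ m = 0"
    using \<open>poly p x = 0\<close> \<open>lead_coeff p = 1\<close>
    by (simp add: poly_altdef m_def lessThan_Suc_atMost[symmetric])
  then have x_m: "x ^ m = - (\<Sum>i<m. coeff p i * x ^ i)" by (simp add: eq_neg_iff_add_eq_0 add.commute)
  have "c ^ m * x ^ k \<in> R" for k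
  proof (induction k rule: less_induct)
    case (less k)
    show ?case
    proof (cases "k < m")
      case True
      then have "c ^ m * x ^ k = c ^ (m - k) * (c * x) ^ k"
        by (simp add: power_mult_distrib power_add[symmetric])
      then show ?thesis using R \<open>c * x \<in> R\<close> \<open>c \<in> R\<close> by (auto intro: subring_mult subring_power)
    next
      case False
      then have "c ^ m * x ^ k = c ^ m * x ^ (k - m) * x ^ m" by (simp add: power_add[symmetric])
      also have "\<dots> = - (\<Sum>i<m. coeff p i * (c ^ m * x ^ (k - m + i)))"
        by (simp add: x_m sum_distrib_left power_add mult_ac)
      also have "\<dots> \<in> R"
      proof (intro subring_uminus[OF R] subring_sum[OF R])
        fix i assume "i \<in> {..<m}"
        then have "c ^ m * x ^ (k - m + i) \<in> R" using less.IH False by simp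
        then show "coeff p i * (c ^ m * x ^ (k - m + i)) \<in> R"
          using subring_mult[OF R] coeff_R by blast
      qed
      finally show ?thesis .
    qed
  qed
  moreover have "c ^ m \<in> R" "c ^ m \<noteq> 0" using R \<open>c \<in> R\<close> \<open>c \<noteq> 0\<close> by (auto intro: subring_power)
  ultimately show ?thesis unfolding almost_integral_def by blast
qed

locale api_with_conductor =
  fixes R :: "'b::field set" and c :: 'b
  assumes api: "api_set R" and subring: "subring_set R"
    and conductor: "c \<in> conductor R (integral_closure R)" and nonzero: "c \<noteq> 0"
begin

lemma mem_integral_closure_iff: "x \<in> integral_closure R \<longleftrightarrow> (\<exists>n\<ge>1. x ^ n \<in> R)"
proof
  assume "x \<in> integral_closure R"
  then have "almost_integral R x"
    using conductor_almost_integral[OF subring conductor nonzero] by blast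
  then obtain n where "n \<ge> 1" "x ^ n \<in> R" by (rule api_almost_integral_power[OF api subring])
  then show "\<exists>n\<ge>1. x ^ n \<in> R" by blast
qed (use power_mem_integral_closure[OF subring] in blast)

lemma integral_closure_power:
  assumes "x \<in> integral_closure R"
  shows "x ^ k \<in> integral_closure R"
proof -
  obtain n where "n \<ge> 1" and "x ^ n \<in> R" using assms unfolding mem_integral_closure_iff by blast
  moreover have "(x ^ k) ^ n = (x ^ n) ^ k" by (simp add: power_mult[symmetric] mult.commute)
  ultimately show ?thesis unfolding mem_integral_closure_iff using subring_power[OF subring] by auto
qed

lemma integral_closure_mult:
  assumes "x \<in> integral_closure R" and "y \<in> integral_closure R"
  shows "x * y \<in> integral_closure R"
proof -
  obtain a b where "a \<ge> 1" "x ^ a \<in> R" "b \<ge> 1" "y ^ b \<in> R"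
    using assms unfolding mem_integral_closure_iff by blast
  moreover have "(x * y) ^ (a * b) = (x ^ a) ^ b * (y ^ b) ^ a"
    by (simp add: power_mult_distrib power_mult[symmetric] mult.commute)
  ultimately have "(x * y) ^ (a * b) \<in> R" and "a * b \<ge> 1"
    using subring by (auto intro: subring_mult subring_power)
  then show ?thesis unfolding mem_integral_closure_iff by blast
qed

lemma integral_closure_add:
  assumes x: "x \<in> integral_closure R" and y: "y \<in> integral_closure R"
  shows "x + y \<in> integral_closure R"
proof -
  have mult_c: "c * z \<in> R" if "z \<in> integral_closure R" for z
    using conductor that unfolding conductor_def by blast
  have "(c * c) * (x + y) ^ k \<in> R" for k
  proof -
    have "(c * c) * (x + y) ^ k = (\<Sum>i\<le>k. of_nat (k choose i) * ((c * x ^ i) * (c * y ^ (k - i))))"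
      unfolding binomial_ring sum_distrib_left by (intro sum.cong refl) (simp only: mult_ac)
    also have "\<dots> \<in> R"
      by (intro subring_sum[OF subring] subring_mult[OF subring] subring_of_nat[OF subring]
          mult_c integral_closure_power x y)
    finally show ?thesis .
  qed
  moreover have "c * c \<in> R"
  proof -
    have "1 \<in> integral_closure R" using subset_integral_closure[OF subring] subring_one[OF subring] by blast
    then have "c \<in> R" using mult_c[of 1] by simp
    then show ?thesis using subring_mult[OF subring] by blast
  qed
  moreover have "c * c \<noteq> 0" using nonzero by simp
  ultimately have "almost_integral R (x + y)" unfolding almost_integral_def by blast
  then obtain n where "n \<ge> 1" "(x + y) ^ n \<in> R" by (rule api_almost_integral_power[OF api subring])
  then show ?thesis unfolding mem_integral_closure_iff by blast
qed

lemma integral_closure_uminus: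
  assumes "x \<in> integral_closure R"
  shows "- x \<in> integral_closure R"
proof -
  have "- x = (- 1) * x" by simp
  moreover have "- 1 \<in> integral_closure R"
    using subset_integral_closure[OF subring] subring_one[OF subring] subring_uminus[OF subring] by blast
  ultimately show ?thesis using integral_closure_mult[OF _ assms] by metis
qed

lemma subring_integral_closure: "subring_set (integral_closure R)"
  unfolding subring_set_def
  using subset_integral_closure[OF subring] subring_zero[OF subring] subring_one[OF subring]
    integral_closure_add integral_closure_mult integral_closure_uminus
  by blast

lemma root_closed_integral_closure: "root_closed (integral_closure R)"
  unfolding root_closed_def
proof (intro allI impI)
  fix x :: 'b and n :: nat
  assume "n \<ge> 1" and "x ^ n \<in> integral_closure R"
  then obtain k where "k \<ge> 1" and "(x ^ n) ^ k \<in> R" unfolding mem_integral_closure_iff by blast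
  then have "x ^ (n * k) \<in> R" and "n * k \<ge> 1" using \<open>n \<ge> 1\<close> by (simp_all add: power_mult)
  then show "x \<in> integral_closure R" unfolding mem_integral_closure_iff by blast
qed

lemma bounded_root_ext_integral_closure: "bounded_root_ext R (integral_closure R)"
proof -
  let ?S = "(*) c ` (integral_closure R - {0})"
  have "1 \<in> integral_closure R" using subset_integral_closure[OF subring] subring_one[OF subring] by blast
  then have nonempty: "?S \<noteq> {}" by auto
  have nonzero_R: "?S \<subseteq> R - {0}" using conductor nonzero unfolding conductor_def by auto
  have stable: "x \<noteq> 0 \<and> (*) x ` ?S \<subseteq> ?S" if "x \<in> integral_closure R - {0}" for x
    using that integral_closure_mult by (auto simp: mult.left_commute)
  obtain N where "N \<ge> 1" and N: "\<And>x. x \<in> integral_closure R - {0} \<Longrightarrow> x ^ N \<in> R"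
    using api_uniform_power[OF api subring nonempty nonzero_R stable] by metis
  have "x ^ N \<in> R" if "x \<in> integral_closure R" for x
    using N[of x] that \<open>N \<ge> 1\<close> subring_zero[OF subring] by (cases "x = 0") (auto simp: power_0_left)
  then show ?thesis using \<open>N \<ge> 1\<close> unfolding bounded_root_ext_def by blast
qed

lemma api_integral_closure: "api_set (integral_closure R)"
  using api_set_bounded_root_ext[OF subring subring_integral_closure subset_integral_closure[OF subring]
      bounded_root_ext_integral_closure api] .

lemma valuation_domain_integral_closure:
  assumes ql: "quasilocal R"
  shows "valuation_domain_set (integral_closure R)"
  unfolding valuation_domain_set_def
proof (intro ballI)
  fix a b assume a: "a \<in> integral_closure R" and b: "b \<in> integral_closure R"
  show "b / a \<in> integral_closure R \<or> a / b \<in> integral_closure R"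
  proof (cases "a = 0 \<or> b = 0")
    case True then show ?thesis using subset_integral_closure[OF subring] subring_zero[OF subring] by auto
  next
    case False
    obtain N where "N \<ge> 1" and N: "\<forall>x\<in>integral_closure R. x ^ N \<in> R"
      using bounded_root_ext_integral_closure unfolding bounded_root_ext_def by blast
    have "a ^ N \<in> R - {0}" "b ^ N \<in> R - {0}" using N a b False by auto
    then obtain n where "n \<ge> 1" and "(b ^ N / a ^ N) ^ n \<in> R \<or> (a ^ N / b ^ N) ^ n \<in> R"
      by (rule api_quasilocal_ratio_power[OF api subring ql])
    then have "(b / a) ^ (N * n) \<in> R \<or> (a / b) ^ (N * n) \<in> R"
      by (simp add: power_divide power_mult)
    moreover have "N * n \<ge> 1" using \<open>N \<ge> 1\<close> \<open>n \<ge> 1\<close> by simp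
    ultimately show ?thesis unfolding mem_integral_closure_iff by blast
  qed
qed

lemma DVR_integral_closure:
  assumes "quasilocal R" and "\<not> is_field_set R"
  shows "DVR (integral_closure R)"
proof -
  have ql: "quasilocal (integral_closure R)"
    using valuation_domain_quasilocal[OF subring_integral_closure valuation_domain_integral_closure]
      assms(1) .
  have "principal_in (integral_closure R) I" if "is_ideal (integral_closure R) I" for I
    using api_principal_ideal[OF api_integral_closure subring_integral_closure ql
        root_closed_integral_closure that] .
  moreover have "\<not> is_field_set (integral_closure R)"
    using not_field_bounded_root_ext[OF subring subset_integral_closure[OF subring]
        bounded_root_ext_integral_closure assms(2)] .
  ultimately show ?thesis unfolding DVR_def using ql by blast
qed

end

lemma subring_dom_in_fract: "subring_set (dom_in_fract :: 'a::idom fract set)"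
  unfolding subring_set_def dom_in_fract_def
proof (intro conjI ballI)
  show "0 \<in> range (\<lambda>a. Fraction_Field.Fract a (1::'a))" by (auto simp: Zero_fract_def)
  show "1 \<in> range (\<lambda>a. Fraction_Field.Fract a (1::'a))" by (auto simp: One_fract_def)
  fix x y :: "'a fract"
  assume "x \<in> range (\<lambda>a. Fraction_Field.Fract a 1)" and "y \<in> range (\<lambda>a. Fraction_Field.Fract a 1)"
  then obtain a b where "x = Fraction_Field.Fract a 1" and "y = Fraction_Field.Fract b 1" by blast
  then show "x + y \<in> range (\<lambda>a. Fraction_Field.Fract a 1)"
    and "x * y \<in> range (\<lambda>a. Fraction_Field.Fract a 1)"
    and "- x \<in> range (\<lambda>a. Fraction_Field.Fract a 1)" by auto
qed

theorem theorem4: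
  fixes D :: "'a::idom fract set" and Dbar :: "'a fract set"
  defines "D \<equiv> dom_in_fract"
      and "Dbar \<equiv> integral_closure dom_in_fract"
  assumes api: "api_set D"
      and cond: "conductor D Dbar \<noteq> {0}"
  shows "bounded_root_ext D Dbar \<and> api_set Dbar \<and>
         (quasilocal D \<and> \<not> is_field_set D \<longrightarrow> DVR Dbar)"
proof -
  have "0 \<in> conductor D Dbar"
    unfolding conductor_def D_def using subring_zero[OF subring_dom_in_fract] by auto
  with cond obtain c where "c \<in> conductor D Dbar" and "c \<noteq> 0" by blast
  then interpret api_with_conductor D c
    using api subring_dom_in_fract unfolding api_with_conductor_def D_def Dbar_def by blast
  show ?thesis
    using bounded_root_ext_integral_closure api_integral_closure DVR_integral_closure
    unfolding Dbar_def D_def by blast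
qed

end
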